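(* Consider the two-source resistive circuit described in the context with $E_1=E_2=E\neq0$, and with the cross link of resistance $R_3>0$ connected. Let $\mathrm{LCL}(R_1,R_2,R_3)=\mathrm{Loss}/\mathrm{Loss}'$, where $\mathrm{Loss}=i_1^2R_1+i_2^2R_2+i_3^2R_3$ and $\mathrm{Loss}'=(2E)^2/(R_1+R_2)$. Then the LCL increases monotonically as $|R_1-R_2|$ increases: namely, for fixed $R_3>0$ and fixed value $r>0$ of one of the two resistances $R_1,R_2$, if the other resistance equals $r+h$ (respectively $r-h$, with $h<r$), then LCL is a strictly increasing function of $h=|R_1-R_2|\ge 0$.
   Context: The circuit consists of two DC voltage sources $E_1,E_2$ and resistors $R_1,R_2>0$, arranged in a single loop so that, when the cross link is absent, the same current $i_1=i_2=(E_1+E_2)/(R_1+R_2)$ flows through $R_1$ and $R_2$ (and the total loss is $\mathrm{Loss}'=(E_1+E_2)^2/(R_1+R_2)$). When a cross link containing a resistor $R_3>0$ is connected, the currents through $R_1,R_2,R_3$ are $$i_1=\frac{E_1(R_2+R_3)+E_2R_3}{R_1R_2+R_1R_3+R_2R_3},\quad i_2=\frac{E_1R_3+E_2(R_1+R_3)}{R_1R_2+R_1R_3+R_2R_3},\quad i_3=\frac{-E_1R_2+E_2R_1}{R_1R_2+R_1R_3+R_2R_3}.$$ The Loss Cost of the Link (LCL) is the ratio of the total heat loss after adding the link to the total heat loss before adding it. *)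

theory Defs
  imports Complex_Main
begin

definition den :: "real \<Rightarrow> real \<Rightarrow> real \<Rightarrow> real" where
  "den R1 R2 R3 = R1 * R2 + R1 * R3 + R2 * R3"

definition cur1 :: "real \<Rightarrow> real \<Rightarrow> real \<Rightarrow> real \<Rightarrow> real \<Rightarrow> real" where
  "cur1 E1 E2 R1 R2 R3 = (E1 * (R2 + R3) + E2 * R3) / den R1 R2 R3"

definition cur2 :: "real \<Rightarrow> real \<Rightarrow> real \<Rightarrow> real \<Rightarrow> real \<Rightarrow> real" where
  "cur2 E1 E2 R1 R2 R3 = (E1 * R3 + E2 * (R1 + R3)) / den R1 R2 R3"

definition cur3 :: "real \<Rightarrow> real \<Rightarrow> real \<Rightarrow> real \<Rightarrow> real \<Rightarrow> real" where
  "cur3 E1 E2 R1 R2 R3 = (- E1 * R2 + E2 * R1) / den R1 R2 R3"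

definition loss :: "real \<Rightarrow> real \<Rightarrow> real \<Rightarrow> real \<Rightarrow> real \<Rightarrow> real" where
  "loss E1 E2 R1 R2 R3 =
     (cur1 E1 E2 R1 R2 R3)^2 * R1 + (cur2 E1 E2 R1 R2 R3)^2 * R2 + (cur3 E1 E2 R1 R2 R3)^2 * R3"

text \<open>Total heat loss without the cross link.\<close>
definition loss0 :: "real \<Rightarrow> real \<Rightarrow> real \<Rightarrow> real \<Rightarrow> real" where
  "loss0 E1 E2 R1 R2 = (E1 + E2)^2 / (R1 + R2)"

definition LCL :: "real \<Rightarrow> real \<Rightarrow> real \<Rightarrow> real \<Rightarrow> real \<Rightarrow> real" where
  "LCL E1 E2 R1 R2 R3 = loss E1 E2 R1 R2 R3 / loss0 E1 E2 R1 R2"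

end

theory Submission
  imports Defs
begin

text \<open>
  With equal sources E the loss is E^2 (R1 + R2 + 4 R3) / D, where
  D = R1 R2 + R1 R3 + R2 R3, so LCL = (R1 + R2)(R1 + R2 + 4 R3) / (4 D).
  Fix one resistance r and let the other one, b, vary. Then
  (r + R3)(r + b) = D + r^2, and LCL becomes an increasing affine function
  of D + A^2 / D, where A = r (r + 2 R3) is the value of D at b = r.
  Since D is increasing in b and x + A^2 / x decreases on (0, A] and
  increases on [A, \<infinity>), LCL increases as b moves away from r in
  either direction.
\<close>

lemma loss_same_emf:
  "loss E E a b c = E\<^sup>2 * (a + b + 4 * c) / den a b c"
proof -
  have "loss E E a b c
      = ((E * (b + c) + E * c)\<^sup>2 * a + (E * c + E * (a + c))\<^sup>2 * b
          + (- E * b + E * a)\<^sup>2 * c) / (den a b c)\<^sup>2"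
    unfolding loss_def cur1_def cur2_def cur3_def
    by (simp add: power_divide add_divide_distrib[symmetric] diff_divide_distrib[symmetric])
  also have "\<dots> = E\<^sup>2 * (a + b + 4 * c) * den a b c / (den a b c)\<^sup>2"
    unfolding den_def by (simp add: algebra_simps power2_eq_square)
  also have "\<dots> = E\<^sup>2 * (a + b + 4 * c) / den a b c"
    by (cases "den a b c = 0") (simp_all add: power2_eq_square)
  finally show ?thesis .
qed

lemma LCL_same_emf:
  assumes "E \<noteq> 0"
  shows "LCL E E a b c = (a + b) * (a + b + 4 * c) / (4 * den a b c)"
proof -
  have "LCL E E a b c = (E\<^sup>2 * (a + b + 4 * c) / den a b c) / (4 * E\<^sup>2 / (a + b))"
    by (simp add: LCL_def loss0_def loss_same_emf power2_eq_square algebra_simps)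
  also have "\<dots> = (a + b) * (a + b + 4 * c) / (4 * den a b c)"
    using assms by (cases "a + b = 0") (simp_all add: divide_simps)
  finally show ?thesis .
qed

lemma LCL_same_emf_commute: "LCL E E a b c = LCL E E b a c"
proof (cases "E = 0")
  case True
  then show ?thesis by (simp add: LCL_def loss0_def)
next
  case False
  then show ?thesis
    by (simp add: LCL_same_emf den_def algebra_simps)
qed

lemma LCL_same_emf_fixed_side:
  assumes "E \<noteq> 0" and "r + c \<noteq> 0" and "den r b c \<noteq> 0"
  shows "LCL E E r b c
    = (den r b c + (den r r c)\<^sup>2 / den r b c + r\<^sup>2 + (r + 2 * c)\<^sup>2) / (4 * (r + c)\<^sup>2)"
proof -
  have sum: "r + b = (den r b c + r\<^sup>2) / (r + c)"
    using assms(2) by (simp add: den_def field_simps power2_eq_square)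
  have "den r r c = r * (r + 2 * c)"
    by (simp add: den_def algebra_simps power2_eq_square)
  with assms show ?thesis
    unfolding LCL_same_emf[OF assms(1)] sum
    by (simp add: field_simps power2_eq_square)
qed

lemma add_divide_less_add_divide_iff:
  fixes a x y :: real
  assumes "0 < x" and "x < y"
  shows "x + a / x < y + a / y \<longleftrightarrow> a < x * y"
    and "y + a / y < x + a / x \<longleftrightarrow> x * y < a"
proof -
  define p where "p = (y - x) / (x * y)"
  have "0 < p"
    using assms by (simp add: p_def)
  have "(y + a / y) - (x + a / x) = (x * y - a) * p"
    using assms by (simp add: p_def field_simps)
  with \<open>0 < p\<close> have "0 < (y + a / y) - (x + a / x) \<longleftrightarrow> a < x * y"
    and "(y + a / y) - (x + a / x) < 0 \<longleftrightarrow> x * y < a"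
    by (simp_all add: zero_less_mult_iff mult_less_0_iff)
  then show "x + a / x < y + a / y \<longleftrightarrow> a < x * y"
    and "y + a / y < x + a / x \<longleftrightarrow> x * y < a"
    by simp_all
qed

lemma den_less_den_iff:
  assumes "r + c > 0"
  shows "den r b1 c < den r b2 c \<longleftrightarrow> b1 < b2"
    and "den r b1 c \<le> den r b2 c \<longleftrightarrow> b1 \<le> b2"
proof -
  have "den r b c = (r + c) * b + r * c" for b
    by (simp add: den_def algebra_simps)
  with assms show "den r b1 c < den r b2 c \<longleftrightarrow> b1 < b2"
    and "den r b1 c \<le> den r b2 c \<longleftrightarrow> b1 \<le> b2"
    by simp_all
qed

lemma LCL_same_emf_less_above:
  assumes "E \<noteq> 0" and "r > 0" and "c > 0" and "r \<le> b1" and "b1 < b2"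
  shows "LCL E E r b1 c < LCL E E r b2 c"
proof -
  define A where "A = den r r c"
  have "0 < A"
    using assms unfolding A_def den_def by (intro add_pos_pos mult_pos_pos)
  moreover have "A \<le> den r b1 c" and "den r b1 c < den r b2 c"
    using assms by (simp_all add: A_def den_less_den_iff)
  ultimately have "A\<^sup>2 < den r b1 c * den r b2 c"
    by (simp add: power2_eq_square mult_le_less_imp_less)
  then have "den r b1 c + A\<^sup>2 / den r b1 c < den r b2 c + A\<^sup>2 / den r b2 c"
    using \<open>0 < A\<close> \<open>A \<le> den r b1 c\<close> \<open>den r b1 c < den r b2 c\<close>
    by (simp add: add_divide_less_add_divide_iff)
  with assms \<open>0 < A\<close> \<open>A \<le> den r b1 c\<close> \<open>den r b1 c < den r b2 c\<close> show ?thesis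
    by (simp add: LCL_same_emf_fixed_side A_def[symmetric] divide_strict_right_mono)
qed

lemma LCL_same_emf_less_below:
  assumes "E \<noteq> 0" and "r > 0" and "c > 0" and "0 < b1" and "b1 < b2" and "b2 \<le> r"
  shows "LCL E E r b2 c < LCL E E r b1 c"
proof -
  define A where "A = den r r c"
  have "0 < den r b1 c"
    using assms unfolding den_def by (intro add_pos_pos mult_pos_pos)
  moreover have "den r b1 c < den r b2 c" and "den r b2 c \<le> A"
    using assms by (simp_all add: A_def den_less_den_iff)
  ultimately have "den r b1 c * den r b2 c < A\<^sup>2"
    by (simp add: power2_eq_square mult_less_le_imp_less)
  then have "den r b2 c + A\<^sup>2 / den r b2 c < den r b1 c + A\<^sup>2 / den r b1 c"
    using \<open>0 < den r b1 c\<close> \<open>den r b1 c < den r b2 c\<close>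
    by (simp add: add_divide_less_add_divide_iff)
  with assms \<open>0 < den r b1 c\<close> \<open>den r b1 c < den r b2 c\<close> show ?thesis
    by (simp add: LCL_same_emf_fixed_side A_def[symmetric] divide_strict_right_mono)
qed

theorem proposition2:
  fixes E r R3 :: real
  assumes "E \<noteq> 0" and "R3 > 0" and "r > 0"
  shows "strict_mono_on {0..} (\<lambda>h. LCL E E r (r + h) R3)
       \<and> strict_mono_on {0..} (\<lambda>h. LCL E E (r + h) r R3)
       \<and> strict_mono_on {0..<r} (\<lambda>h. LCL E E r (r - h) R3)
       \<and> strict_mono_on {0..<r} (\<lambda>h. LCL E E (r - h) r R3)"
proof -
  have above: "strict_mono_on {0..} (\<lambda>h. LCL E E r (r + h) R3)"
    by (rule strict_mono_onI) (use assms in \<open>auto intro: LCL_same_emf_less_above\<close>)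
  have below: "strict_mono_on {0..<r} (\<lambda>h. LCL E E r (r - h) R3)"
    by (rule strict_mono_onI) (use assms in \<open>auto intro: LCL_same_emf_less_below\<close>)
  have swap: "(\<lambda>h. LCL E E (f h) r R3) = (\<lambda>h. LCL E E r (f h) R3)" for f :: "real \<Rightarrow> real"
    by (rule ext) (rule LCL_same_emf_commute)
  show ?thesis
    unfolding swap using above below by simp
qed

end
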